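(* Let $r\ge 3$, $s_r \ge \cdots \ge s_1 \ge 1$, and $m,n\ge 1$ be integers. Then $$Z(m,n,s_1,\ldots,s_r) \le \frac{(s_2+\cdots+s_r-r+1)^{1/s_1}}{r-1}\, m\, n^{\,r-1-\frac{1}{s_1\cdots s_{r-1}}} + (s_1-1)\binom{n}{r-1}.$$
   Context: An $r$-graph is a set of $r$-element subsets (edges) of a finite vertex set. An $m$ by $n$ semibipartite $r$-graph is an $r$-graph $\mathcal{H}$ with vertex set partitioned into $V_1,V_2$, $|V_1|=m$, $|V_2|=n$, such that every edge contains exactly one vertex of $V_1$. $K^r_{s_1,\ldots,s_r}$ is the complete $r$-partite $r$-graph with parts $W_1,\ldots,W_r$ of sizes $s_1,\ldots,s_r$ (edges: all $r$-sets with exactly one vertex in each part). An ordered copy of $K^r_{s_1,\ldots,s_r}$ in such $\mathcal{H}$ is a copy in which $W_1\subseteq V_1$ and $W_2,\ldots,W_r\subseteq V_2$. $Z(m,n,s_1,\ldots,s_r)$ is the maximum number of edges in an $m$ by $n$ semibipartite $r$-graph with no ordered copy of $K^r_{s_1,\ldots,s_r}$. *)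

theory Defs
  imports Complex_Main
begin

definition semibipartite :: "'v set \<Rightarrow> 'v set \<Rightarrow> nat \<Rightarrow> 'v set set \<Rightarrow> bool" where
  "semibipartite V1 V2 r H \<longleftrightarrow> V1 \<inter> V2 = {} \<and>
     (\<forall>e\<in>H. e \<subseteq> V1 \<union> V2 \<and> card e = r \<and> card (e \<inter> V1) = 1)"

definition has_ordered_copy ::
  "'v set \<Rightarrow> 'v set \<Rightarrow> nat \<Rightarrow> (nat \<Rightarrow> nat) \<Rightarrow> 'v set set \<Rightarrow> bool" where
  "has_ordered_copy V1 V2 r s H \<longleftrightarrow>
     (\<exists>W :: nat \<Rightarrow> 'v set.
        (\<forall>i\<in>{1..r}. finite (W i) \<and> card (W i) = s i) \<and>
        W 1 \<subseteq> V1 \<and> (\<forall>i\<in>{2..r}. W i \<subseteq> V2) \<and>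
        (\<forall>i\<in>{1..r}. \<forall>j\<in>{1..r}. i \<noteq> j \<longrightarrow> W i \<inter> W j = {}) \<and>
        (\<forall>f. (\<forall>i\<in>{1..r}. f i \<in> W i) \<longrightarrow> f ` {1..r} \<in> H))"

text \<open>Z(m,n,s_1,...,s_r), computed on the canonical vertex set V1 = {0..<m}, V2 = {m..<m+n}
  (the value is invariant under relabelling vertices).\<close>
definition Z :: "nat \<Rightarrow> nat \<Rightarrow> nat \<Rightarrow> (nat \<Rightarrow> nat) \<Rightarrow> nat" where
  "Z m n r s = Max {card H | H :: nat set set.
      semibipartite {0..<m} {m..<m+n} r H \<and> \<not> has_ordered_copy {0..<m} {m..<m+n} r s H}"

end

theory Submission
  imports Defs "HOL-Analysis.Convex"
begin

(* For an s_1-set S of V_1, let its common link be the family of (r-1)-sets T of V_2 with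
   insert v T an edge for every v in S. A copy of K^{r-1}_{s_2,...,s_r} in this link, together
   with S as first part, is an ordered copy of K^r_{s_1,...,s_r}; so every common link is
   K^{r-1}_{s_2,...,s_r}-free, and by Erdos's bound (proved by the same argument, by induction
   on the uniformity) it has at most (s_2+...+s_r-r+1)/(r-1) n^{r-1-1/(s_2...s_{r-1})} edges.
   With d(T) the number of v in V_1 such that insert v T is an edge, double counting gives
   sum_T d(T) = |H| and sum_T C(d(T), s_1) = sum_S |link S|. As (d-s_1+1)^{s_1} <= s_1! C(d, s_1),
   the power-mean inequality bounds sum_T d(T) by (s_1-1) C(n, r-1) plus
   C(n, r-1)^{1-1/s_1} m max_S |link S|^{1/s_1}, and C(n, r-1) <= n^{r-1}/(r-1) finishes. *)

lemma (in comm_monoid_set) atLeast1_atMost_Suc_shift: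
  "F g {1..Suc k} = g 1 \<^bold>* F (\<lambda>i. g (Suc i)) {1..k}"
proof -
  have "F g {1..Suc k} = g 1 \<^bold>* F g {Suc 1..Suc k}"
    by (rule atLeast_Suc_atMost) simp
  then show ?thesis
    by (simp only: shift_bounds_cl_Suc_ivl)
qed

lemma convex_on_power_nonneg: "convex_on {0::real..} (\<lambda>x. x ^ n)"
  by (intro f''_ge0_imp_convex derivative_eq_intros | simp)+

lemma power_sum_le_card_power_sum:
  fixes f :: "'a \<Rightarrow> real"
  assumes "finite I" "\<And>i. i \<in> I \<Longrightarrow> f i \<ge> 0" "t \<ge> 1"
  shows "(\<Sum>i\<in>I. f i) ^ t \<le> real (card I) ^ (t - 1) * (\<Sum>i\<in>I. f i ^ t)"
proof (cases "I = {}")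
  case True
  then show ?thesis using assms by (simp add: power_0_left)
next
  case False
  define N where "N = real (card I)"
  have N: "N > 0" using False assms(1) by (simp add: N_def card_gt_0_iff)
  have "(\<Sum>i\<in>I. f i) ^ t / N ^ t = (\<Sum>i\<in>I. (1 / N) *\<^sub>R f i) ^ t"
    by (simp add: sum_divide_distrib flip: power_divide)
  also have "\<dots> \<le> (\<Sum>i\<in>I. 1 / N * f i ^ t)"
    using convex_on_sum[OF assms(1) False convex_on_power_nonneg, of "\<lambda>_. 1 / N" f] assms N False
    by (simp add: N_def)
  also have "\<dots> = (\<Sum>i\<in>I. f i ^ t) / N"
    by (simp add: sum_divide_distrib)
  finally have "(\<Sum>i\<in>I. f i) ^ t / N ^ t \<le> (\<Sum>i\<in>I. f i ^ t) / N" .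
  moreover have "N ^ t = N * N ^ (t - 1)"
    using assms(3) by (simp flip: power_Suc)
  ultimately show ?thesis
    using N by (simp add: N_def field_simps)
qed

lemma power_le_fact_mult_choose: "real (d + 1 - t) ^ t \<le> fact t * real (d choose t)"
proof (induction t arbitrary: d)
  case 0
  then show ?case by simp
next
  case (Suc t)
  show ?case
  proof (cases d)
    case 0
    then show ?thesis by simp
  next
    case (Suc d')
    have "real (d + 1 - Suc t) ^ Suc t = real (d' + 1 - t) * real (d' + 1 - t) ^ t"
      using Suc by simp
    also have "\<dots> \<le> real (Suc d') * (fact t * real (d' choose t))"
      using Suc.IH by (intro mult_mono) auto
    also have "\<dots> = fact t * (real (Suc t) * real (d choose Suc t))"
      using Suc Suc_times_binomial[of t d'] by (metis mult.left_commute of_nat_mult)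
    also have "\<dots> = fact (Suc t) * real (d choose Suc t)"
      by (simp add: algebra_simps)
    finally show ?thesis .
  qed
qed

lemma power_powr_reciprocal:
  fixes a :: real
  assumes "a \<ge> 0" "t \<ge> 1"
  shows "(a ^ t) powr (1 / real t) = a"
  using assms by (cases "a = 0") (simp_all add: powr_realpow[symmetric] powr_powr)

lemma powr_reciprocal_le_self_nat:
  assumes "a \<ge> 1"
  shows "real N powr (1 / real a) \<le> real N"
proof (cases "N = 0")
  case False
  then have "real N powr (1 / real a) \<le> real N powr 1"
    using assms by (intro powr_mono) auto
  then show ?thesis
    using False by simp
qed simp

lemma sum_le_if_sum_power_le:
  fixes x :: "'a \<Rightarrow> real"
  assumes I: "finite I" and x: "\<And>i. i \<in> I \<Longrightarrow> x i \<ge> 0" and t: "t \<ge> 1"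
    and M: "M \<ge> 0" and E: "E \<ge> 0" and power: "(\<Sum>i\<in>I. x i ^ t) \<le> M ^ t * E"
  shows "(\<Sum>i\<in>I. x i) \<le> real (card I) powr (1 - 1 / real t) * M * E powr (1 / real t)"
proof (cases "I = {}")
  case True
  then show ?thesis by simp
next
  case False
  define N where "N = real (card I)"
  have N: "N > 0" using False I by (simp add: N_def card_gt_0_iff)
  have "(\<Sum>i\<in>I. x i) = ((\<Sum>i\<in>I. x i) ^ t) powr (1 / real t)"
    using t x by (simp add: power_powr_reciprocal sum_nonneg)
  also have "\<dots> \<le> (N ^ (t - 1) * (M ^ t * E)) powr (1 / real t)"
  proof (rule powr_mono2)
    have "(\<Sum>i\<in>I. x i) ^ t \<le> N ^ (t - 1) * (\<Sum>i\<in>I. x i ^ t)"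
      unfolding N_def using I x t by (rule power_sum_le_card_power_sum)
    also have "\<dots> \<le> N ^ (t - 1) * (M ^ t * E)"
      using power N by (simp add: mult_left_mono)
    finally show "(\<Sum>i\<in>I. x i) ^ t \<le> N ^ (t - 1) * (M ^ t * E)" .
  qed (use x in \<open>simp_all add: sum_nonneg\<close>)
  also have "\<dots> = (N ^ (t - 1)) powr (1 / real t) * (M ^ t) powr (1 / real t) * E powr (1 / real t)"
    using N M E by (simp add: powr_mult)
  also have "\<dots> = N powr (1 - 1 / real t) * M * E powr (1 / real t)"
    using N M t by (simp add: power_powr_reciprocal powr_realpow[symmetric] powr_powr of_nat_diff field_simps)
  finally show ?thesis
    by (simp add: N_def)
qed

lemma sum_le_if_sum_choose_le:
  fixes d :: "'a \<Rightarrow> nat"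
  assumes I: "finite I" and t: "t \<ge> 1" and E: "E \<ge> 0"
    and choose: "(\<Sum>T\<in>I. real (d T choose t)) \<le> real (m choose t) * E"
  shows "real (\<Sum>T\<in>I. d T) \<le> (real t - 1) * real (card I)
           + real (card I) powr (1 - 1 / real t) * real m * E powr (1 / real t)"
proof -
  \<comment> \<open>truncated subtraction: \<open>x T = max 0 (d T - (t - 1))\<close>\<close>
  define x where "x T = real (d T + 1 - t)" for T
  have "(\<Sum>T\<in>I. x T ^ t) \<le> (\<Sum>T\<in>I. fact t * real (d T choose t))"
    unfolding x_def by (intro sum_mono power_le_fact_mult_choose)
  also have "\<dots> \<le> fact t * (real (m choose t) * E)"
    using choose by (simp add: sum_distrib_left[symmetric])
  also have "\<dots> \<le> real m ^ t * E"
  proof -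
    have "fact t * real (m choose t) \<le> real m ^ t"
      using binomial_fact_pow[of m t] by (metis mult.commute of_nat_fact of_nat_le_iff of_nat_mult of_nat_power)
    then show ?thesis
      using E by (simp add: mult.assoc[symmetric] mult_right_mono)
  qed
  finally have "(\<Sum>T\<in>I. x T) \<le> real (card I) powr (1 - 1 / real t) * real m * E powr (1 / real t)"
    using I t E by (intro sum_le_if_sum_power_le) (simp_all add: x_def)
  moreover have "(\<Sum>T\<in>I. x T) = real (\<Sum>T\<in>I. d T + 1 - t)"
    by (simp add: x_def)
  moreover have "(\<Sum>T\<in>I. d T) \<le> (t - 1) * card I + (\<Sum>T\<in>I. d T + 1 - t)"
  proof -
    have "(\<Sum>T\<in>I. d T) \<le> (\<Sum>T\<in>I. (t - 1) + (d T + 1 - t))"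
      by (intro sum_mono) (use t in simp)
    then show ?thesis
      by (simp add: sum.distrib mult.commute)
  qed
  then have "real (\<Sum>T\<in>I. d T) \<le> real ((t - 1) * card I) + real (\<Sum>T\<in>I. d T + 1 - t)"
    by (metis of_nat_add of_nat_le_iff)
  moreover have "real ((t - 1) * card I) = (real t - 1) * real (card I)"
    using t by (simp add: of_nat_diff)
  ultimately show ?thesis
    by linarith
qed

lemma kst_powr_bound:
  fixes n N A P :: real and a k :: nat
  assumes "n > 0" "k > 0" "a > 0" "A \<ge> 0" "N \<ge> 0" "N \<le> n ^ k / real k"
  shows "N powr (1 - 1 / real a) * (A / real k * n powr (real k - 1 / P)) powr (1 / real a)
    \<le> A powr (1 / real a) / real k * n powr (real k - 1 / (real a * P))"
proof -
  have k: "real k powr (1 - 1 / real a) * real k powr (1 / real a) = real k"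
    using assms by (simp flip: powr_add)
  have "N powr (1 - 1 / real a) * (A / real k * n powr (real k - 1 / P)) powr (1 / real a)
      \<le> (n ^ k / real k) powr (1 - 1 / real a) * (A / real k * n powr (real k - 1 / P)) powr (1 / real a)"
    using assms by (intro mult_right_mono powr_mono2) auto
  also have "\<dots> = A powr (1 / real a) / (real k powr (1 - 1 / real a) * real k powr (1 / real a)) *
       (n powr (real k * (1 - 1 / real a)) * n powr ((real k - 1 / P) / real a))"
    using assms by (simp add: powr_mult powr_divide powr_realpow[symmetric] powr_powr)
  also have "\<dots> = A powr (1 / real a) / real k * n powr (real k * (1 - 1 / real a) + (real k - 1 / P) / real a)"
    by (simp only: k powr_add)
  also have "real k * (1 - 1 / real a) + (real k - 1 / P) / real a = real k - 1 / (real a * P)"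
    using assms by (simp add: field_simps)
  finally show ?thesis .
qed

lemma choose_le_power_div:
  assumes "k \<ge> 1"
  shows "real (n choose k) \<le> real n ^ k / real k"
proof -
  have "(n choose k) * k \<le> (n choose k) * fact k"
    using fact_ge_self[of k] by (rule mult_le_mono2)
  also have "\<dots> \<le> n ^ k"
    by (rule binomial_fact_pow)
  finally have "real (n choose k) * real k \<le> real n ^ k"
    by (metis of_nat_le_iff of_nat_mult of_nat_power)
  then show ?thesis
    using assms by (simp add: field_simps)
qed

lemma sum_choose_card_eq_sum_card_common:
  fixes R :: "'v \<Rightarrow> 'a \<Rightarrow> bool"
  assumes "finite V" "finite I"
  shows "(\<Sum>T\<in>I. card {v\<in>V. R v T} choose t) = (\<Sum>S | S \<subseteq> V \<and> card S = t. card {T\<in>I. \<forall>v\<in>S. R v T})"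
proof -
  have "card {v\<in>V. R v T} choose t = card {S. S \<subseteq> V \<and> card S = t \<and> (\<forall>v\<in>S. R v T)}" for T
  proof -
    have "{S. S \<subseteq> {v\<in>V. R v T} \<and> card S = t} = {S. S \<subseteq> V \<and> card S = t \<and> (\<forall>v\<in>S. R v T)}"
      by auto
    then show ?thesis
      using n_subsets[of "{v\<in>V. R v T}" t] assms(1) by simp
  qed
  then have "(\<Sum>T\<in>I. card {v\<in>V. R v T} choose t)
      = (\<Sum>T\<in>I. \<Sum>S | S \<subseteq> V \<and> card S = t. if \<forall>v\<in>S. R v T then 1 else 0)"
    using assms(1) by (simp add: sum.If_cases Int_def conj_ac)
  also have "\<dots> = (\<Sum>S | S \<subseteq> V \<and> card S = t. \<Sum>T\<in>I. if \<forall>v\<in>S. R v T then 1 else 0)"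
    by (rule sum.swap)
  also have "\<dots> = (\<Sum>S | S \<subseteq> V \<and> card S = t. card {T\<in>I. \<forall>v\<in>S. R v T})"
    using assms(2) by (simp add: sum.If_cases Int_def)
  finally show ?thesis .
qed

lemma sum_choose_card_le_if_common_le:
  fixes R :: "'v \<Rightarrow> 'a \<Rightarrow> bool"
  assumes V: "finite V" and I: "finite I"
    and common: "\<And>S. S \<subseteq> V \<Longrightarrow> card S = a \<Longrightarrow> real (card {T\<in>I. \<forall>v\<in>S. R v T}) \<le> E"
  shows "(\<Sum>T\<in>I. real (card {v\<in>V. R v T} choose a)) \<le> real (card V choose a) * E"
proof -
  have "(\<Sum>T\<in>I. real (card {v\<in>V. R v T} choose a))
      = (\<Sum>S | S \<subseteq> V \<and> card S = a. real (card {T\<in>I. \<forall>v\<in>S. R v T}))"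
    using arg_cong[OF sum_choose_card_eq_sum_card_common[OF V I, of R a], of real]
    by (simp only: of_nat_sum)
  also have "\<dots> \<le> (\<Sum>S | S \<subseteq> V \<and> card S = a. E)"
    using common by (intro sum_mono) simp
  also have "\<dots> = real (card V choose a) * E"
    using n_subsets[OF V] by simp
  finally show ?thesis .
qed

lemma sum_degree_le_if_common_neighbourhoods_small:
  fixes R :: "'v \<Rightarrow> 'w set \<Rightarrow> bool"
  assumes V1: "finite V1" and V2: "finite V2" "card V2 \<ge> 1"
    and k: "k \<ge> 1" and a: "a \<ge> 1" and A: "A \<ge> 0"
    and common: "\<And>S. S \<subseteq> V1 \<Longrightarrow> card S = a \<Longrightarrow>
      real (card {T. T \<subseteq> V2 \<and> card T = k \<and> (\<forall>v\<in>S. R v T)})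
        \<le> A / real k * real (card V2) powr (real k - 1 / P)"
  shows "real (\<Sum>T | T \<subseteq> V2 \<and> card T = k. card {v\<in>V1. R v T})
    \<le> (real a - 1) * real (card V2 choose k)
      + A powr (1 / real a) / real k * real (card V1) * real (card V2) powr (real k - 1 / (real a * P))"
proof -
  define I where "I = {T. T \<subseteq> V2 \<and> card T = k}"
  define n where "n = real (card V2)"
  define E where "E = A / real k * n powr (real k - 1 / P)"
  have I: "finite I" "card I = card V2 choose k"
    using V2 n_subsets[of V2 k] by (simp_all add: I_def)
  have E: "E \<ge> 0"
    using A by (simp add: E_def)
  have "{T\<in>I. \<forall>v\<in>S. R v T} = {T. T \<subseteq> V2 \<and> card T = k \<and> (\<forall>v\<in>S. R v T)}" for S
    by (auto simp: I_def)
  then have "(\<Sum>T\<in>I. real (card {v\<in>V1. R v T} choose a)) \<le> real (card V1 choose a) * E"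
    using common by (intro sum_choose_card_le_if_common_le[OF V1 I(1)]) (simp add: E_def n_def)
  then have "real (\<Sum>T\<in>I. card {v\<in>V1. R v T})
      \<le> (real a - 1) * real (card I) + real (card I) powr (1 - 1 / real a) * real (card V1) * E powr (1 / real a)"
    by (rule sum_le_if_sum_choose_le[OF I(1) a E])
  also have "real (card I) powr (1 - 1 / real a) * real (card V1) * E powr (1 / real a)
      \<le> A powr (1 / real a) / real k * real (card V1) * n powr (real k - 1 / (real a * P))"
  proof -
    have "real (card I) \<le> n ^ k / real k"
      using I(2) choose_le_power_div[OF k] by (simp add: n_def)
    then have "real (card I) powr (1 - 1 / real a) * E powr (1 / real a)
        \<le> A powr (1 / real a) / real k * n powr (real k - 1 / (real a * P))"
      unfolding E_def using V2 k a A by (intro kst_powr_bound) (auto simp: n_def)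
    from mult_right_mono[OF this, of "real (card V1)"] show ?thesis
      by (simp add: mult_ac)
  qed
  finally show ?thesis
    using I(2) unfolding I_def n_def by simp
qed

definition partite_copy :: "nat \<Rightarrow> (nat \<Rightarrow> nat) \<Rightarrow> (nat \<Rightarrow> 'v set) \<Rightarrow> 'v set set \<Rightarrow> bool" where
  "partite_copy k t W G \<longleftrightarrow>
     (\<forall>i\<in>{1..k}. finite (W i) \<and> card (W i) = t i) \<and>
     (\<forall>i\<in>{1..k}. \<forall>j\<in>{1..k}. i \<noteq> j \<longrightarrow> W i \<inter> W j = {}) \<and>
     (\<forall>f. (\<forall>i\<in>{1..k}. f i \<in> W i) \<longrightarrow> f ` {1..k} \<in> G)"

lemma has_ordered_copy_iff:
  "has_ordered_copy V1 V2 r s H \<longleftrightarrow> (\<exists>W. partite_copy r s W H \<and> W 1 \<subseteq> V1 \<and> (\<forall>i\<in>{2..r}. W i \<subseteq> V2))"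
  unfolding has_ordered_copy_def partite_copy_def by blast

lemma partite_copy_part_subset_Union:
  assumes copy: "partite_copy k t W G" and pos: "\<forall>i\<in>{1..k}. t i \<ge> 1" and j: "j \<in> {1..k}"
  shows "W j \<subseteq> \<Union>G"
proof
  fix w assume w: "w \<in> W j"
  have nonempty: "W i \<noteq> {}" if "i \<in> {1..k}" for i
  proof -
    have "card (W i) = t i" "t i \<ge> 1"
      using copy pos that unfolding partite_copy_def by blast+
    then show ?thesis
      by auto
  qed
  define f where "f i = (if i = j then w else SOME x. x \<in> W i)" for i
  have "\<forall>i\<in>{1..k}. f i \<in> W i"
    using w nonempty by (simp add: f_def some_in_eq)
  then have "f ` {1..k} \<in> G"
    using copy unfolding partite_copy_def by blast
  moreover have "w \<in> f ` {1..k}"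
    using j by (force simp: f_def)
  ultimately show "w \<in> \<Union>G" by blast
qed

lemma not_partite_copy_empty:
  assumes "\<forall>i\<in>{1..k}. t i \<ge> 1"
  shows "\<not> partite_copy k t W {}"
proof
  assume copy: "partite_copy k t W {}"
  show False
  proof (cases "k = 0")
    case True
    then show False using copy by (simp add: partite_copy_def)
  next
    case False
    then have one: "1 \<in> {1..k}"
      by simp
    have "W 1 \<subseteq> \<Union>{}"
      by (rule partite_copy_part_subset_Union[OF copy assms one])
    moreover have "card (W 1) = t 1" "t 1 \<ge> 1"
      using copy assms one unfolding partite_copy_def by blast+
    ultimately show False
      by simp
  qed
qed

lemma partite_copy_insert_link_part:
  assumes copy: "partite_copy k (\<lambda>i. t (Suc i)) W L" and pos: "\<forall>i\<in>{1..k}. t (Suc i) \<ge> 1"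
    and S: "finite S" "card S = t 1" and link: "\<forall>T\<in>L. \<forall>v\<in>S. v \<notin> T \<and> insert v T \<in> G"
  shows "partite_copy (Suc k) t (\<lambda>i. if i = 1 then S else W (i - 1)) G"
proof -
  have idx: "{1..Suc k} = insert 1 (Suc ` {1..k})"
    using Icc_eq_insert_lb_nat[of 1 "Suc k"] by (simp add: image_Suc_atLeastAtMost)
  have disj: "S \<inter> W j = {}" if "j \<in> {1..k}" for j
    using partite_copy_part_subset_Union[OF copy pos that] link by blast
  have transversal: "insert (f 1) ((\<lambda>j. f (Suc j)) ` {1..k}) \<in> G"
    if "f 1 \<in> S" "\<forall>j\<in>{1..k}. f (Suc j) \<in> W j" for f
    using that copy link by (simp add: partite_copy_def)
  show ?thesis
    unfolding partite_copy_def idx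
  proof (intro conjI)
    show "\<forall>i\<in>insert 1 (Suc ` {1..k}). finite (if i = 1 then S else W (i - 1))
        \<and> card (if i = 1 then S else W (i - 1)) = t i"
      using copy S by (simp add: partite_copy_def del: image_Suc_atLeastAtMost)
    show "\<forall>i\<in>insert 1 (Suc ` {1..k}). \<forall>j\<in>insert 1 (Suc ` {1..k}). i \<noteq> j \<longrightarrow>
        (if i = 1 then S else W (i - 1)) \<inter> (if j = 1 then S else W (j - 1)) = {}"
      using copy disj by (auto simp: partite_copy_def simp del: image_Suc_atLeastAtMost) blast
    show "\<forall>f. (\<forall>i\<in>insert 1 (Suc ` {1..k}). f i \<in> (if i = 1 then S else W (i - 1)))
        \<longrightarrow> f ` insert 1 (Suc ` {1..k}) \<in> G"
      using transversal by (simp add: image_image del: image_Suc_atLeastAtMost)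
  qed
qed

lemma partite_copy_1_if_card_ge:
  assumes G: "\<forall>e\<in>G. card e = 1" and t: "t 1 \<le> card G"
  obtains W where "partite_copy 1 t W G"
proof -
  define U where "U = {v. {v} \<in> G}"
  have G_eq: "G = (\<lambda>v. {v}) ` U"
    using G by (auto simp: U_def card_1_singleton_iff)
  have "card U = card G"
    by (simp add: G_eq card_image)
  then obtain W1 where W1: "W1 \<subseteq> U" "card W1 = t 1" "finite W1"
    using t by (metis obtain_subset_with_card_n)
  have "partite_copy 1 t (\<lambda>_. W1) G"
    using W1 by (auto simp: partite_copy_def U_def)
  then show ?thesis ..
qed

lemma sum_card_insert_eq_sum_card_remove:
  assumes "finite V" "finite I" "finite G"
  shows "(\<Sum>T\<in>I. card {v\<in>V. v \<notin> T \<and> insert v T \<in> G}) = (\<Sum>e\<in>G. card {v\<in>e \<inter> V. e - {v} \<in> I})"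
proof -
  have "(\<Sum>T\<in>I. card {v\<in>V. v \<notin> T \<and> insert v T \<in> G}) = card (SIGMA T:I. {v\<in>V. v \<notin> T \<and> insert v T \<in> G})"
    using assms by simp
  also have "\<dots> = card (SIGMA e:G. {v\<in>e \<inter> V. e - {v} \<in> I})"
  proof (rule bij_betw_same_card[of "\<lambda>(T, v). (insert v T, v)"],
         rule bij_betw_byWitness[where f' = "\<lambda>(e, v). (e - {v}, v)"])
  qed (auto simp: insert_absorb)
  also have "\<dots> = (\<Sum>e\<in>G. card {v\<in>e \<inter> V. e - {v} \<in> I})"
    using assms by simp
  finally show ?thesis .
qed

lemma erdos_step_estimate:
  fixes n k a N :: nat and P :: real
  assumes n: "n \<ge> 1" and k: "k \<ge> 1" and a: "a \<ge> 1" and P: "P \<ge> 1"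
  shows "(real a - 1) * real (n choose k)
      + real N powr (1 / real a) / real k * real n * real n powr (real k - 1 / (real a * P))
    \<le> (real a - 1 + real N) * real n powr (real (Suc k) - 1 / (real a * P))"
proof -
  define e where "e = real (Suc k) - 1 / (real a * P)"
  have "real a * P \<ge> 1 * 1"
    using a P by (intro mult_mono) auto
  then have "real k \<le> e"
    by (simp add: e_def)
  have "real (n choose k) \<le> real n ^ k / real k"
    using k by (rule choose_le_power_div)
  also have "\<dots> \<le> real n ^ k"
    using k by (simp add: divide_le_eq mult_le_cancel_left1)
  also have "\<dots> \<le> real n powr e"
    using n \<open>real k \<le> e\<close> by (simp add: powr_realpow[symmetric] powr_mono)
  finally have choose: "real (n choose k) \<le> real n powr e" .
  have "real N powr (1 / real a) / real k \<le> real N powr (1 / real a)"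
    using k by (simp add: divide_le_eq mult_le_cancel_left1)
  also have "\<dots> \<le> real N"
    using a by (rule powr_reciprocal_le_self_nat)
  finally have N_bound: "real N powr (1 / real a) / real k \<le> real N" .
  have "real n * real n powr (real k - 1 / (real a * P)) = real n powr e"
    by (simp add: e_def powr_mult_base add_diff_eq add.commute)
  then have "(real a - 1) * real (n choose k)
      + real N powr (1 / real a) / real k * real n * real n powr (real k - 1 / (real a * P))
    \<le> (real a - 1) * real n powr e + real N powr (1 / real a) / real k * real n powr e"
    using choose a by (simp add: mult.assoc mult_left_mono)
  also have "\<dots> \<le> (real a - 1) * real n powr e + real N * real n powr e"
    using N_bound by (intro add_left_mono mult_right_mono) auto
  finally show ?thesis
    by (simp add: e_def algebra_simps)
qed

lemma sum_card_insert_eq_Suc_mult_card: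
  assumes V: "finite V" and G: "G \<subseteq> {e. e \<subseteq> V \<and> card e = Suc k}"
  shows "(\<Sum>T | T \<subseteq> V \<and> card T = k. card {v\<in>V. v \<notin> T \<and> insert v T \<in> G}) = Suc k * card G"
proof -
  let ?I = "{T. T \<subseteq> V \<and> card T = k}"
  have "finite G"
    using V G by (auto intro: finite_subset[of G "Pow V"])
  then have "(\<Sum>T\<in>?I. card {v\<in>V. v \<notin> T \<and> insert v T \<in> G}) = (\<Sum>e\<in>G. card {v\<in>e \<inter> V. e - {v} \<in> ?I})"
    using V by (intro sum_card_insert_eq_sum_card_remove) simp_all
  also have "\<dots> = (\<Sum>e\<in>G. Suc k)"
  proof (intro sum.cong refl)
    fix e assume "e \<in> G"
    then have e: "e \<subseteq> V" "card e = Suc k"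
      using G by auto
    then have "finite e"
      by (simp add: card_ge_0_finite)
    with e have "{v\<in>e \<inter> V. e - {v} \<in> ?I} = e"
      by auto
    with e show "card {v\<in>e \<inter> V. e - {v} \<in> ?I} = Suc k"
      by simp
  qed
  finally show ?thesis
    by simp
qed

lemma card_le_if_links_small:
  assumes V: "finite V" "card V \<ge> 1" and k: "k \<ge> 1" and a: "a \<ge> 1" and P: "P \<ge> 1"
    and G: "G \<subseteq> {e. e \<subseteq> V \<and> card e = Suc k}"
    and link: "\<And>S. S \<subseteq> V \<Longrightarrow> card S = a \<Longrightarrow>
      real (card {T. T \<subseteq> V \<and> card T = k \<and> (\<forall>v\<in>S. v \<notin> T \<and> insert v T \<in> G)})
        \<le> real N / real k * real (card V) powr (real k - 1 / P)"
  shows "real (Suc k) * real (card G) \<le> (real a - 1 + real N) * real (card V) powr (real (Suc k) - 1 / (real a * P))"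
proof -
  have "real (Suc k) * real (card G)
      = real (\<Sum>T | T \<subseteq> V \<and> card T = k. card {v\<in>V. v \<notin> T \<and> insert v T \<in> G})"
    using sum_card_insert_eq_Suc_mult_card[OF V(1) G] by (simp add: algebra_simps)
  also have "\<dots> \<le> (real a - 1) * real (card V choose k)
        + real N powr (1 / real a) / real k * real (card V) * real (card V) powr (real k - 1 / (real a * P))"
    by (rule sum_degree_le_if_common_neighbourhoods_small[OF V(1) V k a of_nat_0_le_iff link])
  also have "\<dots> \<le> (real a - 1 + real N) * real (card V) powr (real (Suc k) - 1 / (real a * P))"
    using V(2) k a P by (rule erdos_step_estimate)
  finally show ?thesis .
qed

lemma card_le_if_no_partite_copy:
  assumes V: "finite V" "card V \<ge> 1" and k: "k \<ge> 1" and t: "\<forall>i\<in>{1..k}. t i \<ge> 1"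
    and G: "G \<subseteq> {e. e \<subseteq> V \<and> card e = k}" and no_copy: "\<nexists>W. partite_copy k t W G"
  shows "real (card G) \<le> (real (\<Sum>i=1..k. t i) - real k) / real k
           * real (card V) powr (real k - 1 / real (\<Prod>i=1..k-1. t i))"
  using k t G no_copy
proof (induction k arbitrary: t G rule: nat_induct_at_least)
  case base
  have "card G < t 1"
    using partite_copy_1_if_card_ge[of G t] base.prems(2,3) by fastforce
  \<comment> \<open>the empty product makes the exponent \<open>0\<close>\<close>
  then show ?case
    using V(2) by simp
next
  case (Suc k)
  define A where "A = (\<Sum>i=1..k. t (Suc i)) - k"
  define P where "P = real (\<Prod>i=1..k-1. t (Suc i))"
  have t': "\<forall>i\<in>{1..k}. t (Suc i) \<ge> 1" and t1: "t 1 \<ge> 1"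
    using Suc.prems(1) by auto
  have "k \<le> (\<Sum>i=1..k. t (Suc i))"
    using sum_bounded_below[of "{1..k}" 1 "\<lambda>i. t (Suc i)"] t' by simp
  then have A: "real A = real (\<Sum>i=1..k. t (Suc i)) - real k"
    by (simp add: A_def of_nat_diff)
  have "(\<Prod>i=1..k-1. t (Suc i)) \<ge> 1"
    using t' by (intro prod_ge_1) auto
  then have P: "P \<ge> 1"
    unfolding P_def by (metis of_nat_1 of_nat_le_iff)
  have link: "real (card {T. T \<subseteq> V \<and> card T = k \<and> (\<forall>v\<in>S. v \<notin> T \<and> insert v T \<in> G)})
      \<le> real A / real k * real (card V) powr (real k - 1 / P)"
    if S: "S \<subseteq> V" "card S = t 1" for S
  proof -
    let ?L = "{T. T \<subseteq> V \<and> card T = k \<and> (\<forall>v\<in>S. v \<notin> T \<and> insert v T \<in> G)}"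
    have no_copy: "\<nexists>W. partite_copy k (\<lambda>i. t (Suc i)) W ?L"
      using partite_copy_insert_link_part[OF _ t' finite_subset[OF S(1) V(1)] S(2)] Suc.prems(3) by blast
    have "?L \<subseteq> {e. e \<subseteq> V \<and> card e = k}"
      by blast
    from Suc.IH[OF t' this no_copy] show ?thesis
      by (simp add: A P_def)
  qed
  have "real (Suc k) * real (card G)
      \<le> (real (t 1) - 1 + real A) * real (card V) powr (real (Suc k) - 1 / (real (t 1) * P))"
    by (rule card_le_if_links_small[OF V Suc.hyps t1 P Suc.prems(2) link])
  also have "real (t 1) - 1 + real A = real (\<Sum>i=1..Suc k. t i) - real (Suc k)"
    unfolding sum.atLeast1_atMost_Suc_shift using A by simp
  also have "real (t 1) * P = real (\<Prod>i=1..Suc k - 1. t i)"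
    using Suc.hyps prod.atLeast1_atMost_Suc_shift[of t "k - 1"] by (simp add: P_def)
  finally show ?case
    by (simp add: field_simps)
qed

lemma sum_card_insert_semibipartite_eq_card:
  assumes H: "semibipartite V1 V2 (Suc k) H" and V: "finite V1" "finite V2"
  shows "(\<Sum>T | T \<subseteq> V2 \<and> card T = k. card {v\<in>V1. v \<notin> T \<and> insert v T \<in> H}) = card H"
proof -
  let ?I = "{T. T \<subseteq> V2 \<and> card T = k}"
  have "finite H"
    using H V unfolding semibipartite_def by (auto intro: finite_subset[of H "Pow (V1 \<union> V2)"])
  then have "(\<Sum>T\<in>?I. card {v\<in>V1. v \<notin> T \<and> insert v T \<in> H}) = (\<Sum>e\<in>H. card {v\<in>e \<inter> V1. e - {v} \<in> ?I})"
    using V by (intro sum_card_insert_eq_sum_card_remove) simp_all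
  also have "\<dots> = (\<Sum>e\<in>H. 1)"
  proof (intro sum.cong refl)
    fix e assume "e \<in> H"
    then have e: "e \<subseteq> V1 \<union> V2" "card e = Suc k" "card (e \<inter> V1) = 1" and disj: "V1 \<inter> V2 = {}"
      using H by (auto simp: semibipartite_def)
    then obtain v where v: "e \<inter> V1 = {v}"
      by (auto simp: card_1_singleton_iff)
    have "finite e" "v \<in> e"
      using e(2) v by (auto simp: card_ge_0_finite)
    with e v disj have "{v\<in>e \<inter> V1. e - {v} \<in> ?I} = e \<inter> V1"
      by auto
    with e show "card {v\<in>e \<inter> V1. e - {v} \<in> ?I} = 1"
      by simp
  qed
  finally show ?thesis
    by simp
qed

lemma no_partite_copy_in_link:
  assumes no_copy: "\<not> has_ordered_copy V1 V2 (Suc k) s H" and s: "\<forall>i\<in>{1..k}. s (Suc i) \<ge> 1"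
    and S: "S \<subseteq> V1" "card S = s 1" "finite S"
  shows "\<nexists>W. partite_copy k (\<lambda>i. s (Suc i)) W {T. T \<subseteq> V2 \<and> card T = k \<and> (\<forall>v\<in>S. v \<notin> T \<and> insert v T \<in> H)}"
proof
  let ?L = "{T. T \<subseteq> V2 \<and> card T = k \<and> (\<forall>v\<in>S. v \<notin> T \<and> insert v T \<in> H)}"
  assume "\<exists>W. partite_copy k (\<lambda>i. s (Suc i)) W ?L"
  then obtain W where W: "partite_copy k (\<lambda>i. s (Suc i)) W ?L" ..
  have "\<forall>i\<in>{2..Suc k}. W (i - 1) \<subseteq> V2"
  proof
    fix i assume "i \<in> {2..Suc k}"
    then have "i - 1 \<in> {1..k}"
      by auto
    from partite_copy_part_subset_Union[OF W s this] show "W (i - 1) \<subseteq> V2"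
      by blast
  qed
  then have "has_ordered_copy V1 V2 (Suc k) s H"
    unfolding has_ordered_copy_iff
    using partite_copy_insert_link_part[OF W s S(3,2)] S(1)
    by (intro exI[of _ "\<lambda>i. if i = 1 then S else W (i - 1)"]) auto
  with no_copy show False ..
qed

lemma card_le_if_no_ordered_copy:
  fixes H :: "'v set set"
  assumes H: "semibipartite V1 V2 (Suc k) H" and no_copy: "\<not> has_ordered_copy V1 V2 (Suc k) s H"
    and V: "finite V1" "finite V2" "card V2 \<ge> 1" and k: "k \<ge> 1" and s: "\<forall>i\<in>{1..Suc k}. s i \<ge> 1"
  shows "real (card H)
    \<le> (real (\<Sum>i=2..Suc k. s i) - real k) powr (1 / real (s 1)) / real k
        * real (card V1) * real (card V2) powr (real k - 1 / real (\<Prod>i=1..k. s i))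
      + (real (s 1) - 1) * real (card V2 choose k)"
proof -
  define A where "A = real (\<Sum>i=1..k. s (Suc i)) - real k"
  define P where "P = real (\<Prod>i=1..k-1. s (Suc i))"
  have s': "\<forall>i\<in>{1..k}. s (Suc i) \<ge> 1" and s1: "s 1 \<ge> 1"
    using s by auto
  have "k \<le> (\<Sum>i=1..k. s (Suc i))"
    using sum_bounded_below[of "{1..k}" 1 "\<lambda>i. s (Suc i)"] s' by simp
  then have A: "A \<ge> 0"
    by (simp add: A_def del: of_nat_sum)
  have link: "real (card {T. T \<subseteq> V2 \<and> card T = k \<and> (\<forall>v\<in>S. v \<notin> T \<and> insert v T \<in> H)})
      \<le> A / real k * real (card V2) powr (real k - 1 / P)"
    if S: "S \<subseteq> V1" "card S = s 1" for S
  proof -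
    let ?L = "{T. T \<subseteq> V2 \<and> card T = k \<and> (\<forall>v\<in>S. v \<notin> T \<and> insert v T \<in> H)}"
    have link_no_copy: "\<nexists>W. partite_copy k (\<lambda>i. s (Suc i)) W ?L"
      using no_copy s' S finite_subset[OF S(1) V(1)] by (rule no_partite_copy_in_link)
    have "?L \<subseteq> {e. e \<subseteq> V2 \<and> card e = k}"
      by blast
    from card_le_if_no_partite_copy[OF V(2,3) k s' this link_no_copy] show ?thesis
      by (simp add: A_def P_def)
  qed
  have "real (card H) = real (\<Sum>T | T \<subseteq> V2 \<and> card T = k. card {v\<in>V1. v \<notin> T \<and> insert v T \<in> H})"
    using sum_card_insert_semibipartite_eq_card[OF H V(1,2)] by simp
  also have "\<dots> \<le> (real (s 1) - 1) * real (card V2 choose k)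
      + A powr (1 / real (s 1)) / real k * real (card V1) * real (card V2) powr (real k - 1 / (real (s 1) * P))"
    by (rule sum_degree_le_if_common_neighbourhoods_small[OF V k s1 A link])
  also have "A = real (\<Sum>i=2..Suc k. s i) - real k"
    using sum.shift_bounds_cl_Suc_ivl[of s 1 k] by (simp add: A_def numeral_2_eq_2)
  also have "real (s 1) * P = real (\<Prod>i=1..k. s i)"
    using k prod.atLeast1_atMost_Suc_shift[of s "k - 1"] by (simp add: P_def)
  finally show ?thesis
    by simp
qed

lemma Z_le:
  assumes s: "\<forall>i\<in>{1..r}. s i \<ge> 1"
    and bound: "\<And>H :: nat set set. semibipartite {0..<m} {m..<m+n} r H \<Longrightarrow>
      \<not> has_ordered_copy {0..<m} {m..<m+n} r s H \<Longrightarrow> real (card H) \<le> B"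
  shows "real (Z m n r s) \<le> B"
proof -
  define HS where "HS = {H :: nat set set. semibipartite {0..<m} {m..<m+n} r H
    \<and> \<not> has_ordered_copy {0..<m} {m..<m+n} r s H}"
  have "finite HS"
    by (rule finite_subset[of _ "Pow (Pow ({0..<m} \<union> {m..<m+n}))"]) (auto simp: HS_def semibipartite_def)
  moreover have "{} \<in> HS"
    using not_partite_copy_empty[OF s] by (auto simp: HS_def semibipartite_def has_ordered_copy_iff)
  ultimately have "Max (card ` HS) \<in> card ` HS"
    by (intro Max_in finite_imageI) auto
  moreover have "Z m n r s = Max (card ` HS)"
    unfolding Z_def HS_def by (simp add: setcompr_eq_image)
  ultimately have "Z m n r s \<in> card ` HS"
    by simp
  then show ?thesis
    using bound by (auto simp: HS_def)
qed

lemma first_le_if_Suc_mono_on: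
  fixes s :: "nat \<Rightarrow> 'a::order"
  assumes "\<forall>i\<in>{1..<r}. s i \<le> s (Suc i)" and "i \<in> {1..r}"
  shows "s 1 \<le> s i"
proof -
  have "\<And>j. j \<in> {1..<r} \<Longrightarrow> s j \<le> s (Suc j)" "{1..<i} \<subseteq> {1..<r}"
    using assms by auto
  then show ?thesis
    using lift_Suc_mono_le_ivl[of "{1..<r}" s 1 i] assms(2) by simp
qed

theorem proposition2p11:
  fixes r m n :: nat and s :: "nat \<Rightarrow> nat"
  assumes "r \<ge> 3" and "s 1 \<ge> 1"
    and "\<forall>i\<in>{1..<r}. s i \<le> s (Suc i)"
    and "m \<ge> 1" and "n \<ge> 1"
  shows "real (Z m n r s) \<le>
     (real (\<Sum>i=2..r. s i) - real r + 1) powr (1 / real (s 1)) / (real r - 1)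
       * real m * real n powr (real r - 1 - 1 / real (\<Prod>i=1..r-1. s i))
     + (real (s 1) - 1) * real (n choose (r - 1))"
proof -
  obtain k where r: "r = Suc k" and k: "k \<ge> 1"
    using assms(1) by (intro that[of "r - 1"]) auto
  have s: "\<forall>i\<in>{1..Suc k}. s i \<ge> 1"
  proof
    fix i assume "i \<in> {1..Suc k}"
    with assms(2) first_le_if_Suc_mono_on[OF assms(3)] show "s i \<ge> 1"
      unfolding r by (meson le_trans)
  qed
  show ?thesis
    unfolding r
  proof (rule Z_le[OF s], goal_cases)
    case (1 H)
    from card_le_if_no_ordered_copy[OF 1 _ _ _ k s] assms(5) show ?case
      by simp
  qed
qed

end
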